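(* Let $k$ be a field and $K$ a field extension of $k$, with algebraic closure $\overline K$. Let $G(x)\in K[x]$ be a polynomial having a non-zero root in $\overline K$ which is algebraic over $k$. Then there exist a polynomial $g(x)\in k[x]$ with $g(0)\neq0$, a polynomial $H(x)\in K[x]$, and a non-zero polynomial $I(x)\in K[x]$ with $\deg(I)<\deg(G)$, all of whose roots in $\overline K$ are zero or transcendental over $k$, such that $I(x)g(x)=H(x)G(x)$ in $K[x]$. *)

theory Defs
  imports "HOL-Computational_Algebra.Polynomial" "HOL-Algebra.Algebraic_Closure_Type"
begin

definition is_subfield :: "'a::field set \<Rightarrow> bool" where
  "is_subfield k \<longleftrightarrow> 0 \<in> k \<and> 1 \<in> k \<and>
     (\<forall>x\<in>k. \<forall>y\<in>k. x + y \<in> k \<and> x * y \<in> k) \<and>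
     (\<forall>x\<in>k. - x \<in> k \<and> inverse x \<in> k)"

definition poly_over :: "'a::field set \<Rightarrow> 'a poly \<Rightarrow> bool" where
  "poly_over k p \<longleftrightarrow> (\<forall>i. coeff p i \<in> k)"

definition algebraic_over :: "'a::field set \<Rightarrow> 'a alg_closure \<Rightarrow> bool" where
  "algebraic_over k z \<longleftrightarrow>
     (\<exists>p::'a poly. p \<noteq> 0 \<and> poly_over k p \<and> poly (map_poly to_ac p) z = 0)"

end

theory Submission
  imports Defs
begin

text \<open>Induction on the degree of G. If G has a non-zero root z that is algebraic over k, take an
  annihilator p \<in> k[x] of z with p(0) \<noteq> 0 and a common divisor D of G and p that vanishes at z.
  Writing G = D G' and p = D q, G divides G' p and deg G' < deg G; multiplying the k-cofactor g
  obtained for G' by p gives one for G. If G has no such root, I = G and g = 1 work.\<close>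

lemma map_poly_to_ac_add [simp]:
  "map_poly to_ac (p + q) = map_poly to_ac p + map_poly to_ac q"
  by (rule poly_eqI) (simp add: coeff_map_poly)

lemma map_poly_to_ac_mult [simp]:
  "map_poly to_ac (p * q) = map_poly to_ac p * map_poly to_ac q"
proof (induction p)
  case (pCons a p)
  then show ?case
    by (simp add: map_poly_smult map_poly_pCons)
qed simp

lemma subfield_sum:
  assumes "is_subfield k" "\<And>i. i \<in> A \<Longrightarrow> f i \<in> k"
  shows "sum f A \<in> k"
  using assms(2) by (induction A rule: infinite_finite_induct)
    (use assms(1) in \<open>auto simp: is_subfield_def\<close>)

lemma poly_over_1:
  assumes "is_subfield k"
  shows "poly_over k 1"
  using assms by (simp add: poly_over_def is_subfield_def coeff_1)

lemma poly_over_mult: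
  assumes "is_subfield k" "poly_over k p" "poly_over k q"
  shows "poly_over k (p * q)"
  using assms unfolding poly_over_def coeff_mult
  by (auto intro!: subfield_sum simp: is_subfield_def)

lemma algebraic_over_annihilator_nonzero_const:
  assumes "algebraic_over k z" "z \<noteq> 0"
  obtains p where "poly_over k p" "poly p 0 \<noteq> 0" "poly (map_poly to_ac p) z = 0"
proof -
  have "\<exists>p'. poly_over k p' \<and> poly p' 0 \<noteq> 0 \<and> poly (map_poly to_ac p') z = 0"
    if "p \<noteq> 0" "poly_over k p" "poly (map_poly to_ac p) z = 0" for p
    using that
  proof (induction p)
    case (pCons a p)
    show ?case
    proof (cases "a = 0")
      case True
      \<comment> \<open>strip a factor x, which does not vanish at z\<close>
      with pCons.prems assms(2) have "p \<noteq> 0" "poly_over k p" "poly (map_poly to_ac p) z = 0"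
        by (auto simp: map_poly_pCons poly_over_def) (metis coeff_pCons_Suc)
      then show ?thesis by (rule pCons.IH)
    qed (use pCons.prems in auto)
  qed simp
  with assms(1) show ?thesis
    unfolding algebraic_over_def using that by blast
qed

text \<open>Euclid's algorithm by hand: gcd on polynomials needs coefficients in
  factorial_ring_gcd, not just a field.\<close>
lemma common_root_common_divisor:
  fixes p q :: "'K::field poly"
  assumes "p \<noteq> 0" "poly (map_poly to_ac p) z = 0" "poly (map_poly to_ac q) z = 0"
  shows "\<exists>d. d \<noteq> 0 \<and> d dvd p \<and> d dvd q \<and> poly (map_poly to_ac d) z = 0"
  using assms
proof (induction q arbitrary: p rule: measure_induct_rule[of euclidean_size])
  case (less q)
  show ?case
  proof (cases "q = 0")
    case True
    with less.prems show ?thesis by (intro exI[of _ p]) simp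
  next
    case False
    have "poly (map_poly to_ac (p mod q)) z = poly (map_poly to_ac (p div q * q + p mod q)) z"
      by (simp only: map_poly_to_ac_add map_poly_to_ac_mult poly_add poly_mult less.prems(3))
        simp
    then have "poly (map_poly to_ac (p mod q)) z = 0"
      using less.prems(2) by simp
    moreover have "euclidean_size (p mod q) < euclidean_size q"
      using False by (rule mod_size_less)
    ultimately obtain d where d: "d \<noteq> 0" "d dvd q" "d dvd p mod q" "poly (map_poly to_ac d) z = 0"
      using less.IH[of "p mod q" q] False less.prems(3) by auto
    moreover from d(2,3) have "d dvd p"
      by (simp add: dvd_mod_iff)
    ultimately show ?thesis by auto
  qed
qed

definition dvd_times_poly_over :: "'a::field set \<Rightarrow> 'a poly \<Rightarrow> 'a poly \<Rightarrow> bool" where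
  "dvd_times_poly_over k G I \<longleftrightarrow> (\<exists>g. poly_over k g \<and> poly g 0 \<noteq> 0 \<and> G dvd I * g)"

lemma dvd_times_poly_over_refl:
  assumes "is_subfield k"
  shows "dvd_times_poly_over k G G"
  unfolding dvd_times_poly_over_def using poly_over_1[OF assms] by (intro exI[of _ 1]) simp

lemma dvd_times_poly_over_trans:
  assumes "is_subfield k" "dvd_times_poly_over k G G'" "dvd_times_poly_over k G' I"
  shows "dvd_times_poly_over k G I"
proof -
  from assms(2) obtain g where g: "poly_over k g" "poly g 0 \<noteq> 0" "G dvd G' * g"
    unfolding dvd_times_poly_over_def by blast
  from assms(3) obtain g' where g': "poly_over k g'" "poly g' 0 \<noteq> 0" "G' dvd I * g'"
    unfolding dvd_times_poly_over_def by blast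
  have "G dvd I * (g' * g)"
    using dvd_trans[OF g(3) mult_dvd_mono[OF g'(3) dvd_refl[of g]]] by (simp add: mult.assoc)
  with g g' poly_over_mult[OF assms(1) g'(1) g(1)] show ?thesis
    unfolding dvd_times_poly_over_def by (intro exI[of _ "g' * g"]) simp
qed

lemma remove_algebraic_root:
  fixes G :: "'K::field poly"
  assumes "G \<noteq> 0" "z \<noteq> 0" "poly (map_poly to_ac G) z = 0" "algebraic_over k z"
  obtains G' where "G' \<noteq> 0" "degree G' < degree G" "dvd_times_poly_over k G G'"
proof -
  obtain p where p: "poly_over k p" "poly p 0 \<noteq> 0" "poly (map_poly to_ac p) z = 0"
    using algebraic_over_annihilator_nonzero_const[OF assms(4,2)] .
  obtain D where D: "D \<noteq> 0" "D dvd G" "D dvd p" "poly (map_poly to_ac D) z = 0"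
    using common_root_common_divisor[OF assms(1,3) p(3)] by auto
  obtain G' where G': "G = D * G'" using D(2) by (elim dvdE)
  obtain q where q: "p = D * q" using D(3) by (elim dvdE)
  have "degree D \<noteq> 0"
  proof
    assume "degree D = 0"
    then obtain c where "D = [:c:]" by (rule degree_eq_zeroE)
    with D(1,4) show False by (simp add: map_poly_pCons)
  qed
  moreover have "G' \<noteq> 0"
    using G' assms(1) by auto
  ultimately have "degree G' < degree G"
    using G' D(1) by (simp add: degree_mult_eq)
  moreover have "G dvd G' * p"
    unfolding G' q by (simp add: mult.left_commute)
  ultimately show ?thesis
    using that \<open>G' \<noteq> 0\<close> p(1,2) unfolding dvd_times_poly_over_def by blast
qed

lemma exists_dvd_times_poly_over_without_algebraic_roots:
  fixes G :: "'K::field poly"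
  assumes "is_subfield k" "G \<noteq> 0"
  shows "\<exists>I. I \<noteq> 0 \<and> degree I \<le> degree G \<and>
           (\<forall>z. poly (map_poly to_ac I) z = 0 \<longrightarrow> z = 0 \<or> \<not> algebraic_over k z) \<and>
           dvd_times_poly_over k G I"
  using assms(2)
proof (induction "degree G" arbitrary: G rule: less_induct)
  case less
  show ?case
  proof (cases "\<exists>z. z \<noteq> 0 \<and> poly (map_poly to_ac G) z = 0 \<and> algebraic_over k z")
    case False
    then show ?thesis
      using less.prems dvd_times_poly_over_refl[OF assms(1)] by (intro exI[of _ G]) auto
  next
    case True
    then obtain z where "z \<noteq> 0" "poly (map_poly to_ac G) z = 0" "algebraic_over k z"
      by blast
    then obtain G' where G': "G' \<noteq> 0" "degree G' < degree G" "dvd_times_poly_over k G G'"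
      using remove_algebraic_root less.prems by metis
    then obtain I where "I \<noteq> 0" "degree I \<le> degree G'"
      "\<forall>z. poly (map_poly to_ac I) z = 0 \<longrightarrow> z = 0 \<or> \<not> algebraic_over k z"
      "dvd_times_poly_over k G' I"
      using less.hyps by blast
    with G' show ?thesis
      using dvd_times_poly_over_trans[OF assms(1)] by (intro exI[of _ I]) auto
  qed
qed

theorem lemma2p2:
  fixes k :: "'K::field set" and G :: "'K poly"
  assumes "is_subfield k"
    and "G \<noteq> 0"
    and "\<exists>z::'K alg_closure. z \<noteq> 0 \<and> poly (map_poly to_ac G) z = 0 \<and> algebraic_over k z"
  shows "\<exists>g H I :: 'K poly.
           poly_over k g \<and> poly g 0 \<noteq> 0 \<and>
           I \<noteq> 0 \<and> degree I < degree G \<and>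
           (\<forall>z::'K alg_closure. poly (map_poly to_ac I) z = 0 \<longrightarrow>
                 z = 0 \<or> \<not> algebraic_over k z) \<and>
           I * g = H * G"
proof -
  from assms(3) obtain G' where G': "G' \<noteq> 0" "degree G' < degree G" "dvd_times_poly_over k G G'"
    using remove_algebraic_root assms(2) by metis
  from exists_dvd_times_poly_over_without_algebraic_roots[OF assms(1) G'(1)] obtain I
    where I: "I \<noteq> 0" "degree I \<le> degree G'"
      "\<forall>z. poly (map_poly to_ac I) z = 0 \<longrightarrow> z = 0 \<or> \<not> algebraic_over k z"
      "dvd_times_poly_over k G' I"
    by blast
  have "degree I < degree G"
    using I(2) G'(2) by simp
  from dvd_times_poly_over_trans[OF assms(1) G'(3) I(4)] obtain g
    where g: "poly_over k g" "poly g 0 \<noteq> 0" "G dvd I * g"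
    unfolding dvd_times_poly_over_def by blast
  then have "I * g = (I * g div G) * G"
    by simp
  with I(1,3) g(1,2) \<open>degree I < degree G\<close> show ?thesis
    by blast
qed

end
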